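(* Let $n\ge1$ and $\gamma\in PSL(n+1,\mathbb{C})$. Then there exists $h\in PSL(n+1,\mathbb{C})$ with $h^{-1}\gamma h(T(r))=T(r)$ for all $r>0$, where $T(r)=\{[z_1:\dots:z_{n+1}]:\sum_{j=1}^n|z_j|^2=r|z_{n+1}|^2\}$, if and only if $\gamma$ is conjugate in $PSL(n+1,\mathbb{C})$ to an elliptic element of $PU(n,1)$.
   Context: $PU(n,1)$ is the image in $PSL(n+1,\mathbb{C})$ of the group of matrices preserving the Hermitian form $\sum_{j=1}^n z_j\bar w_j-z_{n+1}\bar w_{n+1}$; it preserves the complex hyperbolic ball $B=\{[z]\in\mathbb{P}^n_{\mathbb{C}}:\sum_{j=1}^n|z_j|^2<|z_{n+1}|^2\}$, and an element of $PU(n,1)$ is elliptic if it has a fixed point in $B$. *)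

theory Defs
  imports "HOL-Analysis.Analysis" "Jordan_Normal_Form.Determinant"
begin

text \<open>Matrices representing elements of PSL(n+1,C): (n+1)x(n+1) complex matrices of
determinant 1 (an element of PSL is such a matrix up to sign; all notions below are
invariant under rescaling). Coordinates z_1..z_(n+1) are indices 0..n; z_(n+1) is index n.
Points of complex projective space are represented by nonzero vectors in C^(n+1).\<close>

definition SL_mat :: "nat \<Rightarrow> complex mat set" where
  "SL_mat m = {A. A \<in> carrier_mat m m \<and> det A = 1}"

definition is_inverse :: "complex mat \<Rightarrow> complex mat \<Rightarrow> bool" where
  "is_inverse A B \<longleftrightarrow> A * B = 1\<^sub>m (dim_row A) \<and> B * A = 1\<^sub>m (dim_row A)"

definition hnorm_first :: "nat \<Rightarrow> complex vec \<Rightarrow> real" where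
  "hnorm_first n z = (\<Sum>j<n. (cmod (z $ j))\<^sup>2)"

definition Tset :: "nat \<Rightarrow> real \<Rightarrow> complex vec set" where
  "Tset n r = {z. z \<in> carrier_vec (n+1) \<and> z \<noteq> 0\<^sub>v (n+1) \<and>
                  hnorm_first n z = r * (cmod (z $ n))\<^sup>2}"

definition ball_B :: "nat \<Rightarrow> complex vec set" where
  "ball_B n = {z. z \<in> carrier_vec (n+1) \<and> z \<noteq> 0\<^sub>v (n+1) \<and>
                  hnorm_first n z < (cmod (z $ n))\<^sup>2}"

definition mat_image :: "complex mat \<Rightarrow> complex vec set \<Rightarrow> complex vec set" where
  "mat_image A S = (\<lambda>z. A *\<^sub>v z) ` S"

definition J_form :: "nat \<Rightarrow> complex mat" where
  "J_form n = mat (n+1) (n+1) (\<lambda>(i,j). if i = j then (if i < n then 1 else -1) else 0)"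

definition conj_transpose :: "complex mat \<Rightarrow> complex mat" where
  "conj_transpose A = transpose_mat (map_mat cnj A)"

definition U_n1 :: "nat \<Rightarrow> complex mat set" where
  "U_n1 n = {A. A \<in> carrier_mat (n+1) (n+1) \<and> conj_transpose A * J_form n * A = J_form n}"

text \<open>the projective class of M lies in PU(n,1) and is elliptic (fixes a point of B)\<close>
definition elliptic_PU :: "nat \<Rightarrow> complex mat \<Rightarrow> bool" where
  "elliptic_PU n M \<longleftrightarrow> (\<exists>A c. A \<in> U_n1 n \<and> c \<noteq> 0 \<and> M = c \<cdot>\<^sub>m A \<and>
      (\<exists>z \<in> ball_B n. \<exists>e. e \<noteq> 0 \<and> A *\<^sub>v z = e \<cdot>\<^sub>v z))"

end

theory Submission
  imports Defs
begin

(* If M preserves every T(r), test it on the vectors (e w, 1), e > 0, which lie in T(e^2 |w|^2):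
   the resulting polynomial identities in e force M = t diag(U, 1) with U unitary, so M/t lies in
   U(n,1) and fixes [0:...:0:1], a point of B.  Conversely, if an element of PU(n,1) fixes [z] in B,
   conjugating it by the boost of U(n,1) carrying [0:...:0:1] to [z] gives an element of U(n,1)
   fixing [0:...:0:1]; such an element is of the form t diag(U, 1) and preserves every T(r).
   Rescaling the conjugating matrices by a root of their determinant puts them in SL(n+1,C). *)

section \<open>The group \<open>U(n,1)\<close>\<close>

abbreviation J_sign :: "nat \<Rightarrow> nat \<Rightarrow> complex" where
  "J_sign n i \<equiv> if i < n then 1 else -1"

lemma conj_transpose_carrier [simp]: "A \<in> carrier_mat a b \<Longrightarrow> conj_transpose A \<in> carrier_mat b a"
  unfolding conj_transpose_def by auto

lemma conj_transpose_index [simp]: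
  "A \<in> carrier_mat a b \<Longrightarrow> i < b \<Longrightarrow> j < a \<Longrightarrow> conj_transpose A $$ (i,j) = cnj (A $$ (j,i))"
  unfolding conj_transpose_def by auto

lemma dim_conj_transpose [simp]:
  "dim_row (conj_transpose A) = dim_col A" "dim_col (conj_transpose A) = dim_row A"
  unfolding conj_transpose_def by auto

lemma conj_transpose_one [simp]: "conj_transpose (1\<^sub>m m) = 1\<^sub>m m"
  unfolding conj_transpose_def by (rule eq_matI) auto

lemma conj_transpose_mult:
  assumes X: "X \<in> carrier_mat m m" and Y: "Y \<in> carrier_mat m m"
  shows "conj_transpose (X * Y) = conj_transpose Y * conj_transpose X"
proof (rule eq_matI)
  fix i j assume "i < dim_row (conj_transpose Y * conj_transpose X)"
    and "j < dim_col (conj_transpose Y * conj_transpose X)"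
  with X Y have i: "i < m" and j: "j < m" by auto
  have "conj_transpose (X * Y) $$ (i,j) = cnj (\<Sum>l<m. X $$ (j,l) * Y $$ (l,i))"
    using X Y i j by (subst conj_transpose_index[of _ m m]) (auto simp: scalar_prod_def atLeast0LessThan)
  also have "\<dots> = (conj_transpose Y * conj_transpose X) $$ (i,j)"
    using X Y i j by (simp add: scalar_prod_def atLeast0LessThan mult.commute)
  finally show "conj_transpose (X * Y) $$ (i,j) = (conj_transpose Y * conj_transpose X) $$ (i,j)" .
qed (use X Y in auto)

lemma dim_J_form [simp]: "dim_row (J_form n) = n+1" "dim_col (J_form n) = n+1"
  unfolding J_form_def by auto

lemma J_form_carrier [simp]: "J_form n \<in> carrier_mat (Suc n) (Suc n)"
  unfolding J_form_def by auto

lemma J_form_index: "i < n+1 \<Longrightarrow> j < n+1 \<Longrightarrow> J_form n $$ (i,j) = (if i = j then J_sign n i else 0)"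
  unfolding J_form_def by auto

lemma sum_lessThan_add_one: "(\<Sum>l<(n::nat)+1. f l) = (\<Sum>l<n. f l) + f n"
  by (simp only: Suc_eq_plus1[symmetric] sum.lessThan_Suc)

lemma U_n1_form_index:
  assumes A: "A \<in> carrier_mat (n+1) (n+1)" and j: "j < n+1" and k: "k < n+1"
  shows "(conj_transpose A * J_form n * A) $$ (j,k) = (\<Sum>i<n+1. cnj (A $$ (i,j)) * J_sign n i * A $$ (i,k))"
proof -
  have "(conj_transpose A * J_form n) $$ (j,l) = cnj (A $$ (l,j)) * J_sign n l" if l: "l < n+1" for l
  proof -
    have "(conj_transpose A * J_form n) $$ (j,l) = (\<Sum>i<n+1. cnj (A $$ (i,j)) * J_form n $$ (i,l))"
      using A j l by (simp add: scalar_prod_def atLeast0LessThan del: sum.lessThan_Suc)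
    also have "\<dots> = (\<Sum>i<n+1. if i = l then cnj (A $$ (i,j)) * J_sign n i else 0)"
      using l by (intro sum.cong) (auto simp: J_form_index)
    finally show ?thesis
      using l by (simp only: sum.delta finite_lessThan) simp
  qed
  then show ?thesis
    using A j k by (simp add: scalar_prod_def atLeast0LessThan del: sum.lessThan_Suc)
qed

lemma U_n1_iff:
  assumes A: "A \<in> carrier_mat (n+1) (n+1)"
  shows "A \<in> U_n1 n \<longleftrightarrow> (\<forall>j<n+1. \<forall>k<n+1.
           (\<Sum>i<n+1. cnj (A $$ (i,j)) * J_sign n i * A $$ (i,k)) = (if j = k then J_sign n j else 0))"
    (is "_ \<longleftrightarrow> ?entries")
proof -
  have "A \<in> U_n1 n \<longleftrightarrow>
        (\<forall>j<n+1. \<forall>k<n+1. (conj_transpose A * J_form n * A) $$ (j,k) = J_form n $$ (j,k))"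
    using A unfolding U_n1_def
    by (auto intro!: eq_matI simp del: index_mult_mat simp add: index_mult_mat(2,3))
  also have "\<dots> \<longleftrightarrow> ?entries"
    by (simp only: U_n1_form_index[OF A] J_form_index cong: imp_cong)
  finally show ?thesis .
qed

lemma U_n1_carrier: "A \<in> U_n1 n \<Longrightarrow> A \<in> carrier_mat (n+1) (n+1)"
  unfolding U_n1_def by simp

lemma U_n1_mult:
  assumes X: "X \<in> U_n1 n" and Y: "Y \<in> U_n1 n"
  shows "X * Y \<in> U_n1 n"
proof -
  have Xc: "X \<in> carrier_mat (n+1) (n+1)" and Yc: "Y \<in> carrier_mat (n+1) (n+1)"
    using X Y by (auto dest: U_n1_carrier)
  have "conj_transpose (X * Y) * J_form n * (X * Y)
        = conj_transpose Y * (conj_transpose X * J_form n * X) * Y"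
    using Xc Yc by (simp add: conj_transpose_mult assoc_mult_mat[of _ "Suc n" "Suc n" _ "Suc n" _ "Suc n"]
      mult_carrier_mat[of _ "Suc n" "Suc n"])
  also have "\<dots> = J_form n"
    using X Y Yc unfolding U_n1_def by simp
  finally show ?thesis
    using Xc Yc unfolding U_n1_def by simp
qed

lemma U_n1_right_inverse:
  assumes X: "X \<in> U_n1 n" and Y: "Y \<in> carrier_mat (n+1) (n+1)" and XY: "X * Y = 1\<^sub>m (n+1)"
  shows "Y \<in> U_n1 n"
proof -
  have Xc: "X \<in> carrier_mat (n+1) (n+1)" using X by (rule U_n1_carrier)
  have "conj_transpose Y * J_form n * Y = conj_transpose Y * (conj_transpose X * J_form n * X) * Y"
    using X unfolding U_n1_def by simp
  also have "\<dots> = conj_transpose (X * Y) * J_form n * (X * Y)"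
    using Xc Y by (simp add: conj_transpose_mult assoc_mult_mat[of _ "Suc n" "Suc n" _ "Suc n" _ "Suc n"]
      mult_carrier_mat[of _ "Suc n" "Suc n"])
  also have "\<dots> = J_form n"
    unfolding XY by simp
  finally show ?thesis
    using Y unfolding U_n1_def by simp
qed

definition J_adjoint :: "nat \<Rightarrow> complex mat \<Rightarrow> complex mat" where
  "J_adjoint n X = mat (n+1) (n+1) (\<lambda>(j,i). J_sign n j * J_sign n i * cnj (X $$ (i,j)))"

lemma J_adjoint_carrier: "J_adjoint n X \<in> carrier_mat (n+1) (n+1)"
  unfolding J_adjoint_def by auto

lemma J_adjoint_mult_self:
  assumes X: "X \<in> U_n1 n"
  shows "J_adjoint n X * X = 1\<^sub>m (n+1)"
proof (rule eq_matI)
  have Xc: "X \<in> carrier_mat (n+1) (n+1)" using X by (rule U_n1_carrier)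
  fix j k assume "j < dim_row (1\<^sub>m (n+1) :: complex mat)" "k < dim_col (1\<^sub>m (n+1) :: complex mat)"
  then have j: "j < n+1" and k: "k < n+1" by auto
  have "(J_adjoint n X * X) $$ (j,k) = J_sign n j * (\<Sum>i<n+1. cnj (X $$ (i,j)) * J_sign n i * X $$ (i,k))"
    using Xc j k unfolding sum_distrib_left
    by (simp add: J_adjoint_def scalar_prod_def atLeast0LessThan ac_simps del: sum.lessThan_Suc)
  also have "\<dots> = 1\<^sub>m (n+1) $$ (j,k)"
    using X j k unfolding U_n1_iff[OF Xc] by simp
  finally show "(J_adjoint n X * X) $$ (j,k) = 1\<^sub>m (n+1) $$ (j,k)" .
qed (use U_n1_carrier[OF X] in \<open>simp_all add: J_adjoint_def\<close>)

lemma U_n1_inverse: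
  assumes X: "X \<in> U_n1 n"
  shows "J_adjoint n X * X = 1\<^sub>m (n+1)" and "X * J_adjoint n X = 1\<^sub>m (n+1)"
    and "J_adjoint n X \<in> U_n1 n"
proof -
  show l: "J_adjoint n X * X = 1\<^sub>m (n+1)" using X by (rule J_adjoint_mult_self)
  show r: "X * J_adjoint n X = 1\<^sub>m (n+1)"
    using mat_mult_left_right_inverse[OF J_adjoint_carrier U_n1_carrier[OF X] l] .
  show "J_adjoint n X \<in> U_n1 n"
    using U_n1_right_inverse[OF X J_adjoint_carrier r] .
qed

section \<open>The stabiliser of \<open>[0:\<dots>:0:1]\<close>\<close>

lemma of_real_cmod_power2: "complex_of_real ((cmod z)^2) = cnj z * z"
  using complex_norm_square[of z] by (simp add: mult.commute)

text \<open>\<open>M = t \<cdot> diag(U, 1)\<close> with \<open>U\<close> unitary: the scalar multiples of the stabiliser of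
  \<open>[0:\<dots>:0:1]\<close> in \<open>U(n,1)\<close>.\<close>
definition unitary_block :: "nat \<Rightarrow> complex mat \<Rightarrow> complex \<Rightarrow> bool" where
  "unitary_block n M t \<longleftrightarrow> M \<in> carrier_mat (n+1) (n+1) \<and> t \<noteq> 0 \<and>
     (\<forall>i<n. M $$ (i,n) = 0) \<and> (\<forall>j<n. M $$ (n,j) = 0) \<and> M $$ (n,n) = t \<and>
     (\<forall>j<n. \<forall>k<n. (\<Sum>i<n. cnj (M $$ (i,j)) * M $$ (i,k)) =
                     (if j = k then complex_of_real ((cmod t)^2) else 0))"

lemma unitary_block_U_n1:
  assumes "unitary_block n M t"
  shows "(1/t) \<cdot>\<^sub>m M \<in> U_n1 n"
proof -
  from assms have M: "M \<in> carrier_mat (n+1) (n+1)" and t: "t \<noteq> 0"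
    and col: "\<forall>i<n. M $$ (i,n) = 0" and row: "\<forall>j<n. M $$ (n,j) = 0" and corner: "M $$ (n,n) = t"
    and orth: "\<forall>j<n. \<forall>k<n. (\<Sum>i<n. cnj (M $$ (i,j)) * M $$ (i,k)) =
                              (if j = k then complex_of_real ((cmod t)^2) else 0)"
    unfolding unitary_block_def by auto
  have tt: "cnj (1/t) * (1/t) * complex_of_real ((cmod t)^2) = 1"
    using t by (simp only: complex_norm_square) (simp add: field_simps)
  show ?thesis unfolding U_n1_iff[OF smult_carrier_mat[OF M]]
  proof (intro allI impI)
    fix j k assume j: "j < n+1" and k: "k < n+1"
    have "(\<Sum>i<n+1. cnj (((1/t) \<cdot>\<^sub>m M) $$ (i,j)) * J_sign n i * ((1/t) \<cdot>\<^sub>m M) $$ (i,k)) =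
       cnj (1/t) * (1/t) * ((\<Sum>i<n. cnj (M $$ (i,j)) * M $$ (i,k)) - cnj (M $$ (n,j)) * M $$ (n,k))"
      using M j k by (simp add: sum_distrib_left algebra_simps)
    also have "\<dots> = (if j = k then J_sign n j else 0)"
    proof -
      have "j < n \<or> j = n" "k < n \<or> k = n" using j k by auto
      then show ?thesis using col row corner orth tt t by auto
    qed
    finally show "(\<Sum>i<n+1. cnj (((1/t) \<cdot>\<^sub>m M) $$ (i,j)) * J_sign n i * ((1/t) \<cdot>\<^sub>m M) $$ (i,k)) =
       (if j = k then J_sign n j else 0)" .
  qed
qed

lemma unitary_block_elliptic:
  assumes M: "unitary_block n M t"
  shows "elliptic_PU n M"
proof -
  from M have Mc: "M \<in> carrier_mat (n+1) (n+1)" and t: "t \<noteq> 0"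
    and col: "\<forall>i<n. M $$ (i,n) = 0" and corner: "M $$ (n,n) = t"
    unfolding unitary_block_def by auto
  let ?u = "unit_vec (n+1) n"
  have "?u \<in> ball_B n"
    unfolding ball_B_def hnorm_first_def by auto
  moreover have "((1/t) \<cdot>\<^sub>m M) *\<^sub>v ?u = 1 \<cdot>\<^sub>v ?u"
  proof (rule eq_vecI)
    fix i assume "i < dim_vec (1 \<cdot>\<^sub>v ?u)"
    then have "i < n \<or> i = n" by auto
    then show "(((1/t) \<cdot>\<^sub>m M) *\<^sub>v ?u) $ i = (1 \<cdot>\<^sub>v ?u) $ i"
      using Mc col corner t by auto
  qed (use Mc in simp)
  moreover have "M = t \<cdot>\<^sub>m ((1/t) \<cdot>\<^sub>m M)"
    using t Mc by (intro eq_matI) auto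
  ultimately show ?thesis
    unfolding elliptic_PU_def using unitary_block_U_n1[OF M] t by fastforce
qed

lemma unitary_block_mult_vec:
  assumes M: "unitary_block n M t" and z: "z \<in> carrier_vec (n+1)"
  shows "(M *\<^sub>v z) $ n = t * z $ n"
    and "i < n \<Longrightarrow> (M *\<^sub>v z) $ i = (\<Sum>l<n. M $$ (i,l) * z $ l)"
proof -
  from M have Mc: "M \<in> carrier_mat (n+1) (n+1)" and col: "\<forall>i<n. M $$ (i,n) = 0"
    and row: "\<forall>j<n. M $$ (n,j) = 0" and corner: "M $$ (n,n) = t"
    unfolding unitary_block_def by auto
  have "(M *\<^sub>v z) $ i = (\<Sum>l<n. M $$ (i,l) * z $ l) + M $$ (i,n) * z $ n" if "i < n+1" for i
    using Mc z that by (simp add: scalar_prod_def atLeast0LessThan)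
  then show "(M *\<^sub>v z) $ n = t * z $ n" and "i < n \<Longrightarrow> (M *\<^sub>v z) $ i = (\<Sum>l<n. M $$ (i,l) * z $ l)"
    using row corner col by auto
qed

lemma unitary_block_hnorm_first:
  assumes M: "unitary_block n M t" and z: "z \<in> carrier_vec (n+1)"
  shows "hnorm_first n (M *\<^sub>v z) = (cmod t)^2 * hnorm_first n z"
proof -
  from M have orth: "\<forall>j<n. \<forall>k<n. (\<Sum>i<n. cnj (M $$ (i,j)) * M $$ (i,k)) =
                              (if j = k then complex_of_real ((cmod t)^2) else 0)"
    unfolding unitary_block_def by auto
  let ?T = "complex_of_real ((cmod t)^2)"
  have "complex_of_real (hnorm_first n (M *\<^sub>v z)) =
        (\<Sum>i<n. cnj (\<Sum>l<n. M $$ (i,l) * z $ l) * (\<Sum>m<n. M $$ (i,m) * z $ m))"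
    unfolding hnorm_first_def of_real_sum of_real_cmod_power2
    using unitary_block_mult_vec(2)[OF M z] by simp
  also have "\<dots> = (\<Sum>l<n. \<Sum>m<n. cnj (z $ l) * z $ m * (\<Sum>i<n. cnj (M $$ (i,l)) * M $$ (i,m)))"
    by (simp add: cnj_sum sum_product sum_distrib_left algebra_simps)
      (subst sum.swap, rule sum.cong, simp, subst sum.swap, simp)
  also have "\<dots> = (\<Sum>l<n. \<Sum>m<n. if m = l then cnj (z $ l) * z $ m * ?T else 0)"
    using orth by (intro sum.cong) auto
  also have "\<dots> = (\<Sum>l<n. cnj (z $ l) * z $ l * ?T)"
    by (simp add: sum.delta)
  also have "\<dots> = complex_of_real ((cmod t)^2 * hnorm_first n z)"
    unfolding hnorm_first_def of_real_mult of_real_sum of_real_cmod_power2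
    by (simp add: sum_distrib_left algebra_simps)
  finally show ?thesis by (simp only: of_real_eq_iff)
qed

lemma unitary_block_invertible:
  assumes M: "unitary_block n M t"
  obtains Mi where "Mi \<in> carrier_mat (n+1) (n+1)" "Mi * M = 1\<^sub>m (n+1)" "M * Mi = 1\<^sub>m (n+1)"
proof
  from M have Mc: "M \<in> carrier_mat (n+1) (n+1)" and t: "t \<noteq> 0" unfolding unitary_block_def by auto
  define A where "A = (1/t) \<cdot>\<^sub>m M"
  show Mi: "(1/t) \<cdot>\<^sub>m J_adjoint n A \<in> carrier_mat (n+1) (n+1)"
    unfolding J_adjoint_def by simp
  have "((1/t) \<cdot>\<^sub>m J_adjoint n A) * M = J_adjoint n A * A"
    unfolding A_def
    using mult_smult_assoc_mat[OF J_adjoint_carrier Mc] mult_smult_distrib[OF J_adjoint_carrier Mc]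
    by simp
  also have "\<dots> = 1\<^sub>m (n+1)"
    unfolding A_def by (rule U_n1_inverse(1)[OF unitary_block_U_n1[OF M]])
  finally show l: "((1/t) \<cdot>\<^sub>m J_adjoint n A) * M = 1\<^sub>m (n+1)" .
  show "M * ((1/t) \<cdot>\<^sub>m J_adjoint n A) = 1\<^sub>m (n+1)"
    by (rule mat_mult_left_right_inverse[OF Mi Mc l])
qed

lemma mult_mat_vec_eq_0_iff:
  fixes M :: "'a :: comm_ring_1 mat"
  assumes M: "M \<in> carrier_mat m m" and Mi: "Mi \<in> carrier_mat m m" and MiM: "Mi * M = 1\<^sub>m m"
    and z: "z \<in> carrier_vec m"
  shows "M *\<^sub>v z = 0\<^sub>v m \<longleftrightarrow> z = 0\<^sub>v m"
proof
  assume "M *\<^sub>v z = 0\<^sub>v m"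
  then have "Mi *\<^sub>v (M *\<^sub>v z) = 0\<^sub>v m" using Mi by auto
  moreover have "Mi *\<^sub>v (M *\<^sub>v z) = z"
    using M Mi z MiM by (simp flip: assoc_mult_mat_vec)
  ultimately show "z = 0\<^sub>v m" by simp
qed (use M in auto)

lemma mat_image_eqI:
  fixes M :: "complex mat"
  assumes M: "M \<in> carrier_mat m m" and Mi: "Mi \<in> carrier_mat m m" and MMi: "M * Mi = 1\<^sub>m m"
    and S: "S \<subseteq> carrier_vec m" and invariant: "\<And>z. z \<in> carrier_vec m \<Longrightarrow> M *\<^sub>v z \<in> S \<longleftrightarrow> z \<in> S"
  shows "mat_image M S = S"
proof
  show "mat_image M S \<subseteq> S"
    using S invariant unfolding mat_image_def by auto
  show "S \<subseteq> mat_image M S"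
  proof
    fix w assume w: "w \<in> S"
    then have wc: "w \<in> carrier_vec m" using S by auto
    have "M *\<^sub>v (Mi *\<^sub>v w) = w"
      using M Mi wc MMi by (simp flip: assoc_mult_mat_vec)
    then show "w \<in> mat_image M S"
      unfolding mat_image_def using invariant[of "Mi *\<^sub>v w"] w Mi wc by (metis image_eqI mult_mat_vec_carrier)
  qed
qed

lemma unitary_block_preserves_Tset:
  assumes M: "unitary_block n M t"
  shows "mat_image M (Tset n r) = Tset n r"
proof -
  from M have Mc: "M \<in> carrier_mat (n+1) (n+1)" and t: "t \<noteq> 0" unfolding unitary_block_def by auto
  obtain Mi where Mi: "Mi \<in> carrier_mat (n+1) (n+1)" "Mi * M = 1\<^sub>m (n+1)" "M * Mi = 1\<^sub>m (n+1)"
    using unitary_block_invertible[OF M] .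
  show ?thesis
  proof (rule mat_image_eqI[OF Mc Mi(1,3)])
    show "Tset n r \<subseteq> carrier_vec (n+1)" unfolding Tset_def by auto
    fix z :: "complex vec" assume z: "z \<in> carrier_vec (n+1)"
    have "hnorm_first n (M *\<^sub>v z) = r * (cmod ((M *\<^sub>v z) $ n))^2 \<longleftrightarrow>
          (cmod t)^2 * hnorm_first n z = (cmod t)^2 * (r * (cmod (z $ n))^2)"
      unfolding unitary_block_hnorm_first[OF M z] unitary_block_mult_vec(1)[OF M z]
      by (simp add: norm_mult power_mult_distrib algebra_simps)
    also have "\<dots> \<longleftrightarrow> hnorm_first n z = r * (cmod (z $ n))^2"
      using t by simp
    finally show "M *\<^sub>v z \<in> Tset n r \<longleftrightarrow> z \<in> Tset n r"
      unfolding Tset_def using z Mc mult_mat_vec_eq_0_iff[OF Mc Mi(1,2) z] by simp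
  qed
qed

section \<open>Matrices preserving every \<open>T(r)\<close>\<close>

lemma quartic_eq_0_on_pos_imp_coeffs_0:
  fixes c0 c1 c2 c3 c4 :: real
  assumes "\<And>e. e > 0 \<Longrightarrow> c0 + c1*e + c2*e^2 + c3*e^3 + c4*e^4 = 0"
  shows "c0 = 0 \<and> c1 = 0 \<and> c2 = 0 \<and> c3 = 0 \<and> c4 = 0"
proof -
  let ?p = "[:c0, c1, c2, c3, c4:]"
  have poly_eq: "poly ?p e = c0 + c1*e + c2*e^2 + c3*e^3 + c4*e^4" for e
    by (simp add: eval_nat_numeral algebra_simps)
  have "{0<..} \<subseteq> {e. poly ?p e = 0}"
    using assms by (simp only: subset_eq greaterThan_iff mem_Collect_eq poly_eq) blast
  then have "?p = 0" using poly_roots_finite infinite_Ioi finite_subset by blast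
  then show ?thesis by simp
qed

lemma cmod_add_power2: "(cmod (x + y))^2 = (cmod x)^2 + (cmod y)^2 + 2 * Re (cnj x * y)"
  by (simp only: cmod_power2) (simp add: power2_eq_square algebra_simps)

lemma cmod_of_real_mult_add_power2:
  "(cmod (complex_of_real e * p + q))^2 = e^2 * (cmod p)^2 + 2 * e * Re (cnj p * q) + (cmod q)^2"
  by (simp only: cmod_power2) (simp add: power2_eq_square algebra_simps)

text \<open>The vector \<open>(e w, 1)\<close> lies in \<open>T(e\<^sup>2 |w|\<^sup>2)\<close>, hence so does its image.\<close>
lemma Tset_preserving_test_vector_identity:
  fixes M :: "complex mat" and w :: "nat \<Rightarrow> complex"
  assumes M: "M \<in> carrier_mat (n+1) (n+1)" and pres: "\<forall>r>0. mat_image M (Tset n r) = Tset n r"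
    and S: "(\<Sum>j<n. (cmod (w j))^2) > 0" and e: "e > 0"
  defines "p i \<equiv> \<Sum>l<n. M $$ (i,l) * w l"
  shows "(\<Sum>i<n. (cmod (complex_of_real e * p i + M $$ (i,n)))^2) =
         e^2 * (\<Sum>j<n. (cmod (w j))^2) * (cmod (complex_of_real e * p n + M $$ (n,n)))^2"
proof -
  define r where "r = e^2 * (\<Sum>j<n. (cmod (w j))^2)"
  define z where "z = vec (n+1) (\<lambda>l. if l < n then complex_of_real e * w l else 1)"
  have zc: "z \<in> carrier_vec (n+1)" and zn: "z $ n = 1" unfolding z_def by simp_all
  have "hnorm_first n z = r"
    unfolding hnorm_first_def r_def sum_distrib_left z_def by (simp add: norm_mult power_mult_distrib)
  moreover have "z \<noteq> 0\<^sub>v (n+1)"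
    using zn by (metis index_zero_vec(1) less_add_one zero_neq_one)
  ultimately have "z \<in> Tset n r" unfolding Tset_def using zc zn by simp
  moreover have "r > 0" unfolding r_def using e S by simp
  ultimately have Mz: "M *\<^sub>v z \<in> Tset n r"
    using pres unfolding mat_image_def by blast
  have Mz_index: "(M *\<^sub>v z) $ i = complex_of_real e * p i + M $$ (i,n)" if "i < n+1" for i
  proof -
    have "(M *\<^sub>v z) $ i = (\<Sum>l<n+1. M $$ (i,l) * z $ l)"
      using M zc that by (simp add: scalar_prod_def atLeast0LessThan del: sum.lessThan_Suc)
    also have "\<dots> = (\<Sum>l<n. M $$ (i,l) * (complex_of_real e * w l)) + M $$ (i,n)"
      unfolding sum_lessThan_add_one z_def by simp
    finally show ?thesis
      unfolding p_def by (simp add: sum_distrib_left ac_simps)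
  qed
  have "hnorm_first n (M *\<^sub>v z) = (\<Sum>i<n. (cmod (complex_of_real e * p i + M $$ (i,n)))^2)"
    unfolding hnorm_first_def by (simp add: Mz_index)
  with Mz Mz_index[of n] show ?thesis
    unfolding Tset_def r_def by simp
qed

lemma Tset_preserving_test_vector:
  fixes M :: "complex mat" and w :: "nat \<Rightarrow> complex"
  assumes M: "M \<in> carrier_mat (n+1) (n+1)" and pres: "\<forall>r>0. mat_image M (Tset n r) = Tset n r"
    and S: "(\<Sum>j<n. (cmod (w j))^2) > 0"
  shows "\<forall>i<n. M $$ (i,n) = 0" and "(\<Sum>l<n. M $$ (n,l) * w l) = 0"
    and "(\<Sum>i<n. (cmod (\<Sum>l<n. M $$ (i,l) * w l))^2) =
         (\<Sum>j<n. (cmod (w j))^2) * (cmod (M $$ (n,n)))^2"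
proof -
  define S where "S = (\<Sum>j<n. (cmod (w j))^2)"
  define p where "p i = (\<Sum>l<n. M $$ (i,l) * w l)" for i
  define X where "X = (\<Sum>i<n. (cmod (p i))^2)"
  define Y where "Y = (\<Sum>i<n. Re (cnj (p i) * M $$ (i,n)))"
  define Z where "Z = (\<Sum>i<n. (cmod (M $$ (i,n)))^2)"
  define A where "A = (cmod (p n))^2"
  define B where "B = Re (cnj (p n) * M $$ (n,n))"
  define T where "T = (cmod (M $$ (n,n)))^2"
  have "Z + (2*Y)*e + (X - S*T)*e^2 + (-2*S*B)*e^3 + (-S*A)*e^4 = 0" if e: "e > 0" for e
  proof -
    have "(\<Sum>i<n. (cmod (complex_of_real e * p i + M $$ (i,n)))^2) =
          e^2 * S * (cmod (complex_of_real e * p n + M $$ (n,n)))^2"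
      using Tset_preserving_test_vector_identity[OF M pres S e] unfolding p_def S_def .
    then have "e^2 * X + 2 * e * Y + Z = e^2 * S * (e^2 * A + 2 * e * B + T)"
      unfolding X_def Y_def Z_def A_def B_def T_def cmod_of_real_mult_add_power2
        sum.distrib sum_distrib_left .
    then show ?thesis by (simp add: eval_nat_numeral algebra_simps)
  qed
  from quartic_eq_0_on_pos_imp_coeffs_0[OF this] have "Z = 0" and "S * A = 0" and "X = S * T"
    by auto
  have "\<forall>i\<in>{..<n}. (cmod (M $$ (i,n)))^2 = 0"
    using \<open>Z = 0\<close> unfolding Z_def by (subst sum_nonneg_eq_0_iff[symmetric]) auto
  then show "\<forall>i<n. M $$ (i,n) = 0" by simp
  show "(\<Sum>l<n. M $$ (n,l) * w l) = 0"
    using \<open>S * A = 0\<close> S unfolding A_def p_def S_def by simp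
  show "(\<Sum>i<n. (cmod (\<Sum>l<n. M $$ (i,l) * w l))^2) = (\<Sum>j<n. (cmod (w j))^2) * (cmod (M $$ (n,n)))^2"
    using \<open>X = S * T\<close> unfolding X_def T_def p_def S_def .
qed

lemma sum_cnj_mult_eq_0_by_polarization:
  fixes x y :: "nat \<Rightarrow> complex"
  assumes "\<And>c. cmod c = 1 \<Longrightarrow>
    (\<Sum>i<n. (cmod (x i + c * y i))^2) = (\<Sum>i<n. (cmod (x i))^2) + (\<Sum>i<n. (cmod (y i))^2)"
  shows "(\<Sum>i<n. cnj (x i) * y i) = 0"
proof -
  define G where "G = (\<Sum>i<n. cnj (x i) * y i)"
  have "Re (c * G) = 0" if c: "cmod c = 1" for c
  proof -
    have "(\<Sum>i<n. (cmod (x i + c * y i))^2) =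
          (\<Sum>i<n. (cmod (x i))^2) + (\<Sum>i<n. (cmod (y i))^2) + 2 * Re (c * G)"
      unfolding cmod_add_power2 sum.distrib G_def sum_distrib_left Re_sum
      by (simp add: norm_mult c algebra_simps)
    with assms[OF c] show ?thesis by simp
  qed
  from this[of 1] this[of \<i>] show ?thesis
    unfolding G_def[symmetric] by (simp add: complex_eq_iff)
qed

lemma det_eq_0_if_zero_column:
  fixes M :: "complex mat"
  assumes M: "M \<in> carrier_mat m m" and k: "k < m" and col: "\<forall>i<m. M $$ (i,k) = 0"
  shows "det M = 0"
proof -
  have "M *\<^sub>v unit_vec m k = 0\<^sub>v m"
    using M k col by (intro eq_vecI) auto
  then show ?thesis
    using det_0_iff_vec_prod_zero[OF M] k unit_vec_carrier unit_vec_nonzero by blast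
qed

lemma Tset_preserving_unit_vector:
  fixes M :: "complex mat"
  assumes M: "M \<in> carrier_mat (n+1) (n+1)" and pres: "\<forall>r>0. mat_image M (Tset n r) = Tset n r"
    and j: "j < n"
  shows "\<forall>i<n. M $$ (i,n) = 0" and "M $$ (n,j) = 0"
    and "(\<Sum>i<n. (cmod (M $$ (i,j)))^2) = (cmod (M $$ (n,n)))^2"
proof -
  have "(\<Sum>l<n. (cmod (if l = j then 1 else 0 :: complex))^2) = 1"
    using j by (simp add: if_distrib[of cmod] if_distrib[of "\<lambda>x. x^2"] cong: if_cong)
  moreover have "(\<Sum>l<n. M $$ (i,l) * (if l = j then 1 else 0)) = M $$ (i,j)" for i
    using j by (simp add: if_distrib[of "\<lambda>x. _ * x"] cong: if_cong)
  ultimately show "\<forall>i<n. M $$ (i,n) = 0" and "M $$ (n,j) = 0"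
    and "(\<Sum>i<n. (cmod (M $$ (i,j)))^2) = (cmod (M $$ (n,n)))^2"
    using Tset_preserving_test_vector[OF M pres, of "\<lambda>l. if l = j then 1 else 0"] by simp_all
qed

lemma Tset_preserving_unitary_block:
  fixes M :: "complex mat"
  assumes n: "n \<ge> 1" and M: "M \<in> carrier_mat (n+1) (n+1)" and dt: "det M \<noteq> 0"
    and pres: "\<forall>r>0. mat_image M (Tset n r) = Tset n r"
  shows "unitary_block n M (M $$ (n,n))"
proof -
  define T where "T = (cmod (M $$ (n,n)))^2"
  have col: "\<forall>i<n. M $$ (i,n) = 0"
    using Tset_preserving_unit_vector(1)[OF M pres, of 0] n by simp
  have row: "\<forall>j<n. M $$ (n,j) = 0"
    using Tset_preserving_unit_vector(2)[OF M pres] by blast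
  have norm: "(\<Sum>i<n. (cmod (M $$ (i,j)))^2) = T" if "j < n" for j
    using Tset_preserving_unit_vector(3)[OF M pres that] unfolding T_def .
  have "M $$ (n,n) \<noteq> 0"
    using det_eq_0_if_zero_column[OF M, of n] col dt by (metis less_Suc_eq less_add_one Suc_eq_plus1)
  moreover have "(\<Sum>i<n. cnj (M $$ (i,j)) * M $$ (i,k)) = 0" if jk: "j < n" "k < n" "j \<noteq> k" for j k
  proof (rule sum_cnj_mult_eq_0_by_polarization)
    fix c :: complex assume c: "cmod c = 1"
    define w where "w l = (if l = j then 1 else 0) + c * (if l = k then 1 else 0)" for l
    have "(\<Sum>l<n. (cmod (w l))^2) = (\<Sum>l<n. (if l = j then 1 else 0) + (if l = k then 1 else 0))"
      using c jk by (intro sum.cong) (auto simp: w_def)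
    also have "\<dots> = 2" using jk by (simp add: sum.distrib)
    finally have "(\<Sum>l<n. (cmod (w l))^2) = 2" .
    moreover have "(\<Sum>l<n. M $$ (i,l) * w l) = M $$ (i,j) + c * M $$ (i,k)" for i
    proof -
      have "(\<Sum>l<n. M $$ (i,l) * w l) = (\<Sum>l<n. M $$ (i,l) * (if l = j then 1 else 0))
            + c * (\<Sum>l<n. M $$ (i,l) * (if l = k then 1 else 0))"
        unfolding w_def by (simp add: sum.distrib sum_distrib_left algebra_simps)
      then show ?thesis using jk by (simp add: if_distrib[of "\<lambda>x. _ * x"] cong: if_cong)
    qed
    ultimately show "(\<Sum>i<n. (cmod (M $$ (i,j) + c * M $$ (i,k)))^2) =
                     (\<Sum>i<n. (cmod (M $$ (i,j)))^2) + (\<Sum>i<n. (cmod (M $$ (i,k)))^2)"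
      using Tset_preserving_test_vector(3)[OF M pres, of w] norm jk unfolding T_def by simp
  qed
  moreover have "(\<Sum>i<n. cnj (M $$ (i,j)) * M $$ (i,j)) = complex_of_real T" if "j < n" for j
    using norm[OF that] unfolding of_real_cmod_power2[symmetric] of_real_sum[symmetric] by simp
  ultimately show ?thesis
    unfolding unitary_block_def T_def using M col row by auto
qed

section \<open>Boosts and elliptic elements\<close>

definition J_plus_outer :: "nat \<Rightarrow> (nat \<Rightarrow> complex) \<Rightarrow> complex mat" where
  "J_plus_outer n x = mat (n+1) (n+1) (\<lambda>(i,j). (if i = j then J_sign n i else 0) + x i * cnj (x j))"

lemma J_plus_outer_carrier: "J_plus_outer n x \<in> carrier_mat (n+1) (n+1)"
  unfolding J_plus_outer_def by simp

text \<open>\<open>(J + x x\<^sup>*)\<^sup>* J (J + x x\<^sup>*) = J + (2 + \<langle>x,x\<rangle>\<^sub>J) x x\<^sup>*\<close>.\<close>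
lemma J_plus_outer_U_n1:
  assumes x: "(\<Sum>i<n+1. J_sign n i * cnj (x i) * x i) = -2"
  shows "J_plus_outer n x \<in> U_n1 n"
  unfolding U_n1_iff[OF J_plus_outer_carrier]
proof (intro allI impI)
  fix j k assume j: "j < n+1" and k: "k < n+1"
  let ?B = "J_plus_outer n x"
  have "cnj (?B $$ (i,j)) * J_sign n i * ?B $$ (i,k) =
        (if i = j then (if j = k then J_sign n j else 0) else 0) + (if i = j then x j * cnj (x k) else 0)
        + (if i = k then x j * cnj (x k) else 0) + x j * cnj (x k) * (J_sign n i * cnj (x i) * x i)"
    if "i < n+1" for i
    using that j k unfolding J_plus_outer_def by (simp add: algebra_simps)
  then have "(\<Sum>i<n+1. cnj (?B $$ (i,j)) * J_sign n i * ?B $$ (i,k)) =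
        (if j = k then J_sign n j else 0) + 2 * (x j * cnj (x k))
        + x j * cnj (x k) * (\<Sum>i<n+1. J_sign n i * cnj (x i) * x i)"
    using j k by (simp add: sum.distrib sum_distrib_left del: sum.lessThan_Suc)
  then show "(\<Sum>i<n+1. cnj (?B $$ (i,j)) * J_sign n i * ?B $$ (i,k)) = (if j = k then J_sign n j else 0)"
    unfolding x by simp
qed

text \<open>With \<open>a = 1/\<surd>(1 - |v|\<^sup>2)\<close>, the vector \<open>x = (a v/\<surd>(a+1), \<surd>(a+1))\<close> has
  \<open>\<langle>x,x\<rangle>\<^sub>J = -2\<close> and \<open>(J + x x\<^sup>*) e\<^sub>n\<^sub>+\<^sub>1 = a (v,1)\<close>: this is the boost of \<open>U(n,1)\<close>
  carrying \<open>[0:\<dots>:0:1]\<close> to \<open>[v:1]\<close>.\<close>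
definition boost_vector :: "nat \<Rightarrow> (nat \<Rightarrow> complex) \<Rightarrow> nat \<Rightarrow> complex" where
  "boost_vector n v i = (let a = 1 / sqrt (1 - (\<Sum>l<n. (cmod (v l))^2)) in
     if i < n then complex_of_real (a / sqrt (a + 1)) * v i else complex_of_real (sqrt (a + 1)))"

lemma boost_vector_J_norm:
  assumes S: "(\<Sum>l<n. (cmod (v l))^2) < 1"
  shows "(\<Sum>i<n+1. J_sign n i * cnj (boost_vector n v i) * boost_vector n v i) = -2"
proof -
  define S where "S = (\<Sum>l<n. (cmod (v l))^2)"
  define a where "a = 1 / sqrt (1 - S)"
  define c where "c = a / sqrt (a + 1)"
  have a: "a > 0" and aS: "a^2 * S = a^2 - 1"
    using S unfolding a_def S_def by (simp_all add: power_divide field_simps)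
  have x: "boost_vector n v i = (if i < n then complex_of_real c * v i else complex_of_real (sqrt (a + 1)))"
    for i unfolding boost_vector_def Let_def c_def a_def S_def ..
  have "(\<Sum>i<n+1. J_sign n i * cnj (boost_vector n v i) * boost_vector n v i) =
        (\<Sum>i<n. complex_of_real (c^2) * (cnj (v i) * v i)) - complex_of_real (sqrt (a + 1))^2"
    unfolding sum_lessThan_add_one x by (simp add: power2_eq_square mult_ac)
  also have "\<dots> = complex_of_real (c^2 * S - (a + 1))"
  proof -
    have "complex_of_real (sqrt (a + 1))^2 = complex_of_real (a + 1)"
      using a by (simp flip: of_real_power)
    then show ?thesis
      unfolding S_def of_real_cmod_power2[symmetric] sum_distrib_left[symmetric] by simp
  qed
  also have "c^2 * S - (a + 1) = -2"
    unfolding c_def using a aS by (simp add: power_divide field_simps power2_eq_square)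
  finally show ?thesis by simp
qed

lemma boost_unit_vec:
  assumes S: "(\<Sum>l<n. (cmod (v l))^2) < 1" and i: "i < n+1"
  shows "(J_plus_outer n (boost_vector n v) *\<^sub>v unit_vec (n+1) n) $ i =
    complex_of_real (1 / sqrt (1 - (\<Sum>l<n. (cmod (v l))^2))) * (if i < n then v i else 1)"
proof -
  define a where "a = 1 / sqrt (1 - (\<Sum>l<n. (cmod (v l))^2))"
  have "a > 0" using S unfolding a_def by simp
  then show ?thesis
    using i unfolding a_def[symmetric] J_plus_outer_def boost_vector_def Let_def
    by (simp add: mult_ac flip: of_real_mult)
qed

lemma U_n1_fixing_last_unitary_block:
  assumes X: "X \<in> U_n1 n" and eig: "X *\<^sub>v unit_vec (n+1) n = e \<cdot>\<^sub>v unit_vec (n+1) n"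
    and c: "c \<noteq> 0"
  shows "unitary_block n (c \<cdot>\<^sub>m X) (c * e)"
proof -
  have Xc: "X \<in> carrier_mat (n+1) (n+1)" using X by (rule U_n1_carrier)
  have gram: "(\<Sum>i<n. cnj (X $$ (i,j)) * X $$ (i,k)) - cnj (X $$ (n,j)) * X $$ (n,k) =
              (if j = k then J_sign n j else 0)" if "j < n+1" "k < n+1" for j k
    using X that unfolding U_n1_iff[OF Xc] sum_lessThan_add_one by simp
  have "X $$ (i,n) = e * unit_vec (n+1) n $ i" if "i < n+1" for i
    using arg_cong[OF eig, of "\<lambda>w. w $ i"] Xc that by simp
  then have col: "\<forall>i<n. X $$ (i,n) = 0" and corner: "X $$ (n,n) = e" by simp_all
  have "cnj e * e = 1"
    using gram[of n n] col corner by simp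
  then have "e \<noteq> 0" by auto
  have row: "\<forall>j<n. X $$ (n,j) = 0"
  proof (intro allI impI)
    fix j assume "j < n"
    then have "cnj (X $$ (n,j)) * e = 0" using gram[of j n] col corner by simp
    then show "X $$ (n,j) = 0" using \<open>e \<noteq> 0\<close> by simp
  qed
  have "(\<Sum>i<n. cnj ((c \<cdot>\<^sub>m X) $$ (i,j)) * (c \<cdot>\<^sub>m X) $$ (i,k)) =
        (if j = k then complex_of_real ((cmod (c * e))^2) else 0)" if "j < n" "k < n" for j k
  proof -
    have "(\<Sum>i<n. cnj ((c \<cdot>\<^sub>m X) $$ (i,j)) * (c \<cdot>\<^sub>m X) $$ (i,k)) =
          cnj c * c * (\<Sum>i<n. cnj (X $$ (i,j)) * X $$ (i,k))"
      using Xc that by (simp add: sum_distrib_left algebra_simps)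
    also have "\<dots> = cnj c * c * (if j = k then 1 else 0)"
      using gram[of j k] row that by simp
    also have "cnj c * c = complex_of_real ((cmod (c * e))^2)"
    proof -
      have "cnj (c * e) * (c * e) = (cnj c * c) * (cnj e * e)" by (simp add: algebra_simps)
      then show ?thesis using \<open>cnj e * e = 1\<close> by (simp only: of_real_cmod_power2) simp
    qed
    finally show ?thesis by simp
  qed
  then show ?thesis
    unfolding unitary_block_def using Xc c \<open>e \<noteq> 0\<close> col row corner by simp
qed

lemma U_n1_eigenvector_in_ball_conjugate:
  assumes A: "A \<in> U_n1 n" and z: "z \<in> ball_B n" and Az: "A *\<^sub>v z = e \<cdot>\<^sub>v z"
  obtains B where "B \<in> U_n1 n"
    and "(J_adjoint n B * A * B) *\<^sub>v unit_vec (n+1) n = e \<cdot>\<^sub>v unit_vec (n+1) n"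
proof
  have zc: "z \<in> carrier_vec (n+1)" and hz: "hnorm_first n z < (cmod (z $ n))^2"
    using z unfolding ball_B_def by auto
  have "hnorm_first n z \<ge> 0" unfolding hnorm_first_def by (rule sum_nonneg) simp
  then have zn: "z $ n \<noteq> 0" using hz by auto
  define v where "v i = z $ i / z $ n" for i
  have S: "(\<Sum>i<n. (cmod (v i))^2) < 1"
    using hz zn unfolding v_def hnorm_first_def
    by (simp add: norm_divide power_divide flip: sum_divide_distrib)
  define B where "B = J_plus_outer n (boost_vector n v)"
  define \<kappa> where "\<kappa> = complex_of_real (1 / sqrt (1 - (\<Sum>i<n. (cmod (v i))^2))) / z $ n"
  let ?u = "unit_vec (n+1) n"
  show B: "B \<in> U_n1 n"
    unfolding B_def by (rule J_plus_outer_U_n1[OF boost_vector_J_norm[OF S]])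
  have Ac: "A \<in> carrier_mat (n+1) (n+1)" and Bc: "B \<in> carrier_mat (n+1) (n+1)"
    and Bic: "J_adjoint n B \<in> carrier_mat (n+1) (n+1)"
    using A B U_n1_carrier J_adjoint_carrier by auto
  have Bu: "B *\<^sub>v ?u = \<kappa> \<cdot>\<^sub>v z"
  proof (rule eq_vecI)
    fix i assume "i < dim_vec (\<kappa> \<cdot>\<^sub>v z)"
    then have i: "i < n+1" using zc by simp
    moreover have "i < n \<or> i = n" using i by auto
    ultimately show "(B *\<^sub>v ?u) $ i = (\<kappa> \<cdot>\<^sub>v z) $ i"
      unfolding B_def boost_unit_vec[OF S i] using zc zn by (auto simp: \<kappa>_def v_def)
  qed (use Bc zc in simp)
  have "(J_adjoint n B * A * B) *\<^sub>v ?u = J_adjoint n B *\<^sub>v (A *\<^sub>v (\<kappa> \<cdot>\<^sub>v z))"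
    using Ac Bc Bic Bu
    by (simp add: assoc_mult_mat_vec[of _ "Suc n" "Suc n" _ "Suc n"] mult_carrier_mat[of _ "Suc n" "Suc n"])
  also have "\<dots> = e \<cdot>\<^sub>v (J_adjoint n B *\<^sub>v (B *\<^sub>v ?u))"
    using Ac Bic zc Bu by (simp add: mult_mat_vec Az smult_smult_assoc mult.commute)
  also have "J_adjoint n B *\<^sub>v (B *\<^sub>v ?u) = ?u"
    using Bc Bic U_n1_inverse(1)[OF B] by (simp flip: assoc_mult_mat_vec)
  finally show "(J_adjoint n B * A * B) *\<^sub>v ?u = e \<cdot>\<^sub>v ?u" .
qed

lemma elliptic_PU_conjugate_unitary_block:
  assumes "elliptic_PU n M"
  obtains B Bi t where "B \<in> carrier_mat (n+1) (n+1)" "Bi \<in> carrier_mat (n+1) (n+1)"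
    "Bi * B = 1\<^sub>m (n+1)" "unitary_block n (Bi * M * B) t"
proof -
  obtain A c z e where A: "A \<in> U_n1 n" and c: "c \<noteq> 0" and M: "M = c \<cdot>\<^sub>m A"
    and z: "z \<in> ball_B n" and Az: "A *\<^sub>v z = e \<cdot>\<^sub>v z"
    using assms unfolding elliptic_PU_def by blast
  obtain B where B: "B \<in> U_n1 n"
    and stabilises_last: "(J_adjoint n B * A * B) *\<^sub>v unit_vec (n+1) n = e \<cdot>\<^sub>v unit_vec (n+1) n"
    using U_n1_eigenvector_in_ball_conjugate[OF A z Az] .
  have Ac: "A \<in> carrier_mat (n+1) (n+1)" and Bc: "B \<in> carrier_mat (n+1) (n+1)"
    using A B U_n1_carrier by auto
  have "J_adjoint n B * M * B = c \<cdot>\<^sub>m (J_adjoint n B * A * B)"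
    unfolding M using Ac Bc J_adjoint_carrier[of n B]
    by (simp add: mult_smult_distrib mult_smult_assoc_mat[of _ "Suc n" "Suc n"]
        mult_carrier_mat[of _ "Suc n" "Suc n"] assoc_mult_mat[of _ "Suc n" "Suc n" _ "Suc n" _ "Suc n"])
  moreover have "unitary_block n (c \<cdot>\<^sub>m (J_adjoint n B * A * B)) (c * e)"
    using U_n1_fixing_last_unitary_block[OF U_n1_mult[OF U_n1_mult[OF U_n1_inverse(3)[OF B] A] B]
        stabilises_last c] .
  ultimately show thesis
    using that[OF Bc J_adjoint_carrier U_n1_inverse(1)[OF B]] by simp
qed

section \<open>Conjugation within \<open>SL(n+1,\<complex>)\<close>\<close>

lemma is_inverse_square:
  assumes h: "h \<in> carrier_mat m m" and "is_inverse h hi"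
  shows "hi \<in> carrier_mat m m" and "h * hi = 1\<^sub>m m" and "hi * h = 1\<^sub>m m"
proof -
  show hhi: "h * hi = 1\<^sub>m m" and hih: "hi * h = 1\<^sub>m m"
    using assms unfolding is_inverse_def by auto
  have "dim_row hi = dim_row (hi * h)" and "dim_col hi = dim_col (h * hi)" by simp_all
  then show "hi \<in> carrier_mat m m" unfolding hhi hih by auto
qed

lemma det_conjugate:
  fixes h hi \<gamma> :: "complex mat"
  assumes h: "h \<in> carrier_mat m m" and hi: "hi \<in> carrier_mat m m" and hih: "hi * h = 1\<^sub>m m"
    and \<gamma>: "\<gamma> \<in> carrier_mat m m"
  shows "det (hi * \<gamma> * h) = det \<gamma>"
proof -
  have "det (hi * \<gamma> * h) = det \<gamma> * det (hi * h)"
    using h hi \<gamma> by (simp add: det_mult[of _ m] mult_carrier_mat[of _ m m])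
  then show ?thesis unfolding hih by simp
qed

lemma complex_root_exists:
  assumes "(w::complex) \<noteq> 0" and "0 < m"
  shows "\<exists>d. d \<noteq> 0 \<and> d ^ m = w"
proof (intro exI conjI)
  show "exp (Ln w / of_nat m) \<noteq> 0" by simp
  have "exp (Ln w / of_nat m) ^ m = exp (of_nat m * (Ln w / of_nat m))"
    by (simp only: exp_of_nat_mult)
  also have "\<dots> = w" using assms by simp
  finally show "exp (Ln w / of_nat m) ^ m = w" .
qed

lemma SL_conjugate_exists:
  fixes P Pi \<gamma> :: "complex mat"
  assumes m: "0 < m" and P: "P \<in> carrier_mat m m" and Pi: "Pi \<in> carrier_mat m m"
    and PiP: "Pi * P = 1\<^sub>m m" and \<gamma>: "\<gamma> \<in> carrier_mat m m"
  shows "\<exists>H \<in> SL_mat m. \<exists>Hi. is_inverse H Hi \<and> Hi * \<gamma> * H = Pi * \<gamma> * P"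
proof -
  have PPi: "P * Pi = 1\<^sub>m m" by (rule mat_mult_left_right_inverse[OF Pi P PiP])
  have "det Pi * det P = 1" using det_mult[OF Pi P] PiP by simp
  then have "det P \<noteq> 0" by auto
  then obtain d where d: "d \<noteq> 0" and dm: "d ^ m = 1 / det P"
    using complex_root_exists[of "1 / det P" m] m by auto
  have scale: "(d \<cdot>\<^sub>m X) * ((1/d) \<cdot>\<^sub>m Y) = X * Y" "((1/d) \<cdot>\<^sub>m Y) * (d \<cdot>\<^sub>m X) = Y * X"
    if "X \<in> carrier_mat m m" "Y \<in> carrier_mat m m" for X Y
    using that d by (auto intro!: eq_matI simp: scalar_prod_def sum_distrib_left algebra_simps)
  define H where "H = d \<cdot>\<^sub>m P"
  define Hi where "Hi = (1/d) \<cdot>\<^sub>m Pi"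
  have "det H = 1"
    unfolding H_def using P dm \<open>det P \<noteq> 0\<close> by simp
  then have "H \<in> SL_mat m" unfolding SL_mat_def H_def using P by simp
  moreover have "is_inverse H Hi"
    unfolding is_inverse_def H_def Hi_def using P Pi PPi PiP by (simp add: scale)
  moreover have "Hi * \<gamma> * H = Pi * \<gamma> * P"
  proof -
    have "Hi * \<gamma> * H = ((1/d) \<cdot>\<^sub>m (Pi * \<gamma>)) * (d \<cdot>\<^sub>m P)"
      unfolding H_def Hi_def using Pi \<gamma> by (simp add: mult_smult_assoc_mat)
    then show ?thesis using P Pi \<gamma> by (simp add: scale)
  qed
  ultimately show ?thesis by blast
qed

lemma elliptic_conjugate_if_Tset_preserving_conjugate:
  assumes n: "n \<ge> 1" and \<gamma>: "\<gamma> \<in> SL_mat (n+1)" and h: "h \<in> SL_mat (n+1)"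
    and hi: "is_inverse h hi" and pres: "\<forall>r>0. mat_image (hi * \<gamma> * h) (Tset n r) = Tset n r"
  shows "elliptic_PU n (hi * \<gamma> * h)"
proof -
  have \<gamma>c: "\<gamma> \<in> carrier_mat (n+1) (n+1)" and hc: "h \<in> carrier_mat (n+1) (n+1)"
    using \<gamma> h unfolding SL_mat_def by auto
  note hi' = is_inverse_square[OF hc hi]
  have "det (hi * \<gamma> * h) \<noteq> 0"
    using det_conjugate[OF hc hi'(1,3) \<gamma>c] \<gamma> unfolding SL_mat_def by simp
  then show ?thesis
    using unitary_block_elliptic[OF Tset_preserving_unitary_block[OF n _ _ pres]] hc hi'(1) \<gamma>c
    by simp
qed

lemma Tset_preserving_conjugate_if_elliptic_conjugate:
  assumes \<gamma>: "\<gamma> \<in> SL_mat (n+1)" and g: "g \<in> SL_mat (n+1)"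
    and gi: "is_inverse g gi" and ell: "elliptic_PU n (gi * \<gamma> * g)"
  shows "\<exists>h \<in> SL_mat (n+1). \<exists>hi. is_inverse h hi \<and>
           (\<forall>r>0. mat_image (hi * \<gamma> * h) (Tset n r) = Tset n r)"
proof -
  have \<gamma>c: "\<gamma> \<in> carrier_mat (n+1) (n+1)" and gc: "g \<in> carrier_mat (n+1) (n+1)"
    using \<gamma> g unfolding SL_mat_def by auto
  note gi' = is_inverse_square[OF gc gi]
  obtain B Bi t where B: "B \<in> carrier_mat (n+1) (n+1)" "Bi \<in> carrier_mat (n+1) (n+1)" "Bi * B = 1\<^sub>m (n+1)"
    and block: "unitary_block n (Bi * (gi * \<gamma> * g) * B) t"
    using elliptic_PU_conjugate_unitary_block[OF ell] .
  have conj: "Bi * (gi * \<gamma> * g) * B = (Bi * gi) * \<gamma> * (g * B)"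
    using B gc gi'(1) \<gamma>c by (simp add: assoc_mult_mat[of _ "Suc n" "Suc n" _ "Suc n" _ "Suc n"]
        mult_carrier_mat[of _ "Suc n" "Suc n"])
  have "(Bi * gi) * (g * B) = Bi * ((gi * g) * B)"
    using B gc gi'(1) by (simp add: assoc_mult_mat[of _ "Suc n" "Suc n" _ "Suc n" _ "Suc n"]
        mult_carrier_mat[of _ "Suc n" "Suc n"])
  also have "\<dots> = 1\<^sub>m (n+1)"
    using B gi'(3) by simp
  finally have "(Bi * gi) * (g * B) = 1\<^sub>m (n+1)" .
  then have "\<exists>H \<in> SL_mat (n+1). \<exists>Hi. is_inverse H Hi \<and> Hi * \<gamma> * H = (Bi * gi) * \<gamma> * (g * B)"
    by (intro SL_conjugate_exists) (use B gc gi'(1) \<gamma>c in auto)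
  then show ?thesis
    unfolding conj[symmetric] using unitary_block_preserves_Tset[OF block] by metis
qed

theorem mainTheorem12:
  fixes n :: nat and \<gamma> :: "complex mat"
  assumes "n \<ge> 1" and "\<gamma> \<in> SL_mat (n+1)"
  shows "(\<exists>h \<in> SL_mat (n+1). \<exists>hi. is_inverse h hi \<and>
            (\<forall>r>0. mat_image (hi * \<gamma> * h) (Tset n r) = Tset n r))
         \<longleftrightarrow>
         (\<exists>g \<in> SL_mat (n+1). \<exists>gi. is_inverse g gi \<and> elliptic_PU n (gi * \<gamma> * g))"
  using elliptic_conjugate_if_Tset_preserving_conjugate[OF assms]
    Tset_preserving_conjugate_if_elliptic_conjugate[OF assms(2)]
  by blast

end
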